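(* Let $\mathcal F$ be a sheaf on a digraph $G$. For all subspaces $U_1,U_2\subset\mathcal F(V)$, $${\rm excess}(\mathcal F,U_1)+{\rm excess}(\mathcal F,U_2)\le{\rm excess}(\mathcal F,U_1\cap U_2)+{\rm excess}(\mathcal F,U_1+U_2).$$ Consequently the set of subspaces $U\subset\mathcal F(V)$ with ${\rm excess}(\mathcal F,U)={\rm m.e.}(\mathcal F)$ is closed under intersection and sum (so has a unique maximal and a unique minimal element), and for any two such maximizers $U_1,U_2$ one has $\Gamma_{\rm ht}(U_1+U_2)=\Gamma_{\rm ht}(U_1)+\Gamma_{\rm ht}(U_2)$.
   Context: A digraph has finite vertex and edge sets with tail/head maps. A sheaf $\mathcal F$ on $G$: finite-dimensional $\mathbb F$-vector spaces $\mathcal F(P)$, $P\in V_G\sqcup E_G$, with linear maps $\mathcal F(t,e)\colon\mathcal F(e)\to\mathcal F(t_Ge)$, $\mathcal F(h,e)\colon\mathcal F(e)\to\mathcal F(h_Ge)$; $\mathcal F(V)=\bigoplus_v\mathcal F(v)$, $\mathcal F(E)=\bigoplus_e\mathcal F(e)$; $d_h,d_t\colon\mathcal F(E)\to\mathcal F(V)$ send the summand $\mathcal F(e)$ into $\mathcal F(h_Ge)$ resp. $\mathcal F(t_Ge)$ via the restriction maps. For $U\subset\mathcal F(V)$, $\Gamma_{\rm ht}(U)=\bigoplus_e\{w\in\mathcal F(e):d_hw\in U,\ d_tw\in U\}\subset\mathcal F(E)$, ${\rm excess}(\mathcal F,U)=\dim\Gamma_{\rm ht}(U)-\dim U$, ${\rm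 m.e.}(\mathcal F)=\max_U{\rm excess}(\mathcal F,U)$. *)

theory Defs
  imports Main "HOL-Library.Function_Algebras" "Graph_Theory.Digraph"
begin

text \<open>Vectors are finitely supported coordinate functions  idx => k;
  scalar multiplication is pointwise.  dim and subspace are the
  library notions of the locale vector_space.\<close>

definition fscale :: "'k::field \<Rightarrow> ('a \<Rightarrow> 'k) \<Rightarrow> ('a \<Rightarrow> 'k)" where
  "fscale c x = (\<lambda>p. c * x p)"

interpretation fvs: vector_space "fscale :: 'k::field \<Rightarrow> ('a \<Rightarrow> 'k) \<Rightarrow> ('a \<Rightarrow> 'k)"
  by unfold_locales (auto simp: fscale_def fun_eq_iff algebra_simps)

definition ssum :: "('a \<Rightarrow> 'k::field) set \<Rightarrow> ('a \<Rightarrow> 'k) set \<Rightarrow> ('a \<Rightarrow> 'k) set" where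
  "ssum U1 U2 = {x + y |x y. x \<in> U1 \<and> y \<in> U2}"

text \<open>A sheaf assigns to each vertex v the space k^(dimV v), to each arc e the
  space k^(dimE e), and to each arc e the restriction maps
  F(h,e): F(e) -> F(head e) and F(t,e): F(e) -> F(tail e), given as matrices
  resH e i j, resT e i j  (row i < dim of the vertex space, column j < dimE e).\<close>

record ('e, 'v, 'k) sheaf =
  dimV :: "'v \<Rightarrow> nat"
  dimE :: "'e \<Rightarrow> nat"
  resH :: "'e \<Rightarrow> nat \<Rightarrow> nat \<Rightarrow> 'k"
  resT :: "'e \<Rightarrow> nat \<Rightarrow> nat \<Rightarrow> 'k"

text \<open>F(V) = direct sum over vertices; F(E) = direct sum over arcs.\<close>

definition FV :: "('v, 'e) pre_digraph \<Rightarrow> ('e, 'v, 'k::field) sheaf \<Rightarrow> ('v \<times> nat \<Rightarrow> 'k) set" where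
  "FV G F = {x. \<forall>v i. x (v, i) \<noteq> 0 \<longrightarrow> v \<in> verts G \<and> i < dimV F v}"

definition FE :: "('v, 'e) pre_digraph \<Rightarrow> ('e, 'v, 'k::field) sheaf \<Rightarrow> ('e \<times> nat \<Rightarrow> 'k) set" where
  "FE G F = {w. \<forall>e j. w (e, j) \<noteq> 0 \<longrightarrow> e \<in> arcs G \<and> j < dimE F e}"

definition d_h :: "('v, 'e) pre_digraph \<Rightarrow> ('e, 'v, 'k::field) sheaf \<Rightarrow> ('e \<times> nat \<Rightarrow> 'k) \<Rightarrow> ('v \<times> nat \<Rightarrow> 'k)" where
  "d_h G F w = (\<lambda>(v, i). if v \<in> verts G \<and> i < dimV F v
      then (\<Sum>e\<in>{e \<in> arcs G. head G e = v}. \<Sum>j<dimE F e. resH F e i j * w (e, j))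
      else 0)"

definition d_t :: "('v, 'e) pre_digraph \<Rightarrow> ('e, 'v, 'k::field) sheaf \<Rightarrow> ('e \<times> nat \<Rightarrow> 'k) \<Rightarrow> ('v \<times> nat \<Rightarrow> 'k)" where
  "d_t G F w = (\<lambda>(v, i). if v \<in> verts G \<and> i < dimV F v
      then (\<Sum>e\<in>{e \<in> arcs G. tail G e = v}. \<Sum>j<dimE F e. resT F e i j * w (e, j))
      else 0)"

definition edge_comp :: "('e \<times> nat \<Rightarrow> 'k::field) \<Rightarrow> 'e \<Rightarrow> ('e \<times> nat \<Rightarrow> 'k)" where
  "edge_comp w e = (\<lambda>(e', j). if e' = e then w (e, j) else 0)"

text \<open>Gamma_ht(U) = direct sum over e of {w in F(e) : d_h w in U, d_t w in U}.\<close>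

definition Gamma_ht :: "('v, 'e) pre_digraph \<Rightarrow> ('e, 'v, 'k::field) sheaf \<Rightarrow> ('v \<times> nat \<Rightarrow> 'k) set \<Rightarrow> ('e \<times> nat \<Rightarrow> 'k) set" where
  "Gamma_ht G F U = {w \<in> FE G F. \<forall>e \<in> arcs G.
      d_h G F (edge_comp w e) \<in> U \<and> d_t G F (edge_comp w e) \<in> U}"

definition excess :: "('v, 'e) pre_digraph \<Rightarrow> ('e, 'v, 'k::field) sheaf \<Rightarrow> ('v \<times> nat \<Rightarrow> 'k) set \<Rightarrow> int" where
  "excess G F U = int (fvs.dim (Gamma_ht G F U)) - int (fvs.dim U)"

definition subspaces_FV :: "('v, 'e) pre_digraph \<Rightarrow> ('e, 'v, 'k::field) sheaf \<Rightarrow> ('v \<times> nat \<Rightarrow> 'k) set set" where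
  "subspaces_FV G F = {U. fvs.subspace U \<and> U \<subseteq> FV G F}"

definition max_excess :: "('v, 'e) pre_digraph \<Rightarrow> ('e, 'v, 'k::field) sheaf \<Rightarrow> int" where
  "max_excess G F = Max (excess G F ` subspaces_FV G F)"

end

theory Submission
  imports Defs
begin

(*
  Write U1 + U2 for ssum U1 U2 and Gamma for Gamma_ht G F.
  Gamma commutes with intersections, and Gamma U1 + Gamma U2 \<subseteq> Gamma (U1 + U2).
  Applying the dimension formula  dim (A + B) + dim (A \<inter> B) = dim A + dim B  to U1, U2
  in F(V) and to Gamma U1, Gamma U2 in F(E) shows that the excess is submodular, with
  equality exactly when Gamma (U1 + U2) = Gamma U1 + Gamma U2.  If U1, U2 maximise the
  excess, submodularity forces U1 \<inter> U2 and U1 + U2 to maximise it too, and hence the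
  equality case.  A nonempty family of subspaces of a finite-dimensional space that is
  closed under sums (intersections) has a greatest (least) member, namely one of
  maximal (minimal) dimension.
*)

section \<open>Finite-dimensional subspaces of a vector space\<close>

context vector_space begin

text \<open>Throughout, "finite-dimensional" means contained in the span of a finite set W.
  Such a space has a finite basis, whose cardinality is its dimension.\<close>

lemma finite_basis_exists:
  assumes "finite W" "S \<subseteq> span W"
  obtains B where "B \<subseteq> S" "independent B" "S \<subseteq> span B" "finite B" "card B = dim S"
proof -
  obtain B where B: "B \<subseteq> S" "independent B" "S \<subseteq> span B" "card B = dim S"
    by (rule basis_exists)
  have "finite B"
    using independent_span_bound[OF assms(1) B(2)] B(1) assms(2) by blast
  from that[OF B(1-3) this B(4)] show ?thesis .
qed

lemma card_independent_le_dim: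
  assumes "finite W" "T \<subseteq> span W" "B \<subseteq> T" "independent B"
  shows "card B \<le> dim T"
proof -
  obtain D where D: "D \<subseteq> T" "independent D" "T \<subseteq> span D" "finite D" "card D = dim T"
    by (rule finite_basis_exists[OF assms(1,2)])
  have "B \<subseteq> span D" using assms(3) D(3) by blast
  from independent_span_bound[OF D(4) assms(4) this] show ?thesis
    using D(5) by simp
qed

text \<open>Monotonicity of dim and its rigidity: a subspace of full dimension is everything.
  These replace the library's dim_subset and subspace_dim_equal, which need a
  finite-dimensional ambient space.\<close>

lemma dim_mono_fin:
  assumes "finite W" "T \<subseteq> span W" "S \<subseteq> T"
  shows "dim S \<le> dim T"
proof -
  obtain B where B: "B \<subseteq> S" "independent B" "S \<subseteq> span B" "card B = dim S"
    by (rule basis_exists)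
  have "B \<subseteq> T" using B(1) assms(3) by blast
  from card_independent_le_dim[OF assms(1,2) this B(2)] show ?thesis
    using B(4) by simp
qed

lemma subspace_dim_equal_fin:
  assumes "finite W" "T \<subseteq> span W" "subspace S" "S \<subseteq> T" "dim T \<le> dim S"
  shows "S = T"
proof -
  have "S \<subseteq> span W" using assms(2,4) by blast
  then obtain B where B: "B \<subseteq> S" "independent B" "S \<subseteq> span B" "finite B" "card B = dim S"
    by (rule finite_basis_exists[OF assms(1)])
  have "a \<in> span B" if a: "a \<in> T" for a
  proof (rule ccontr)
    assume a_out: "a \<notin> span B"
    then have "a \<notin> B" using span_base by blast
    then have card: "card (insert a B) = dim S + 1" using B(4,5) by simp
    have "insert a B \<subseteq> T" using a B(1) assms(4) by blast
    from card_independent_le_dim[OF assms(1,2) this independent_insertI[OF a_out B(2)]]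
    show False using card assms(5) by simp
  qed
  then show ?thesis
    using span_subspace[OF B(1,3) assms(3)] assms(4) by blast
qed

text \<open>Elements of D - C are added
  one at a time; a dependency would put an element of D into the span of B together
  with the previously added ones, contradicting the independence of D.\<close>

lemma independent_Un_common_basis:
  assumes "subspace S" "subspace T" "C \<subseteq> S" "independent C"
    and "D \<subseteq> T" "independent D" "finite D"
    and "B \<subseteq> C" "B \<subseteq> D" "S \<inter> T \<subseteq> span B"
  shows "independent (C \<union> D)"
proof -
  have "independent (C \<union> X)" if "finite X" "X \<subseteq> D - C" for X
    using that
  proof (induction X rule: finite_induct)
    case empty then show ?case using assms(4) by simp
  next
    case (insert a X)
    have aD: "a \<in> D" "a \<notin> C" and XD: "X \<subseteq> D - C" using insert.prems by auto
    have "a \<notin> span (C \<union> X)"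
    proof
      assume "a \<in> span (C \<union> X)"
      then obtain s x where sx: "a = s + x" "s \<in> span C" "x \<in> span X"
        by (auto simp: span_Un)
      have "s \<in> S" using sx(2) span_minimal[OF assms(3,1)] by blast
      moreover have "s \<in> T"
      proof -
        have "x \<in> T" using sx(3) span_minimal[OF _ assms(2), of X] XD assms(5) by blast
        moreover have "a \<in> T" using aD assms(5) by blast
        moreover have "s = a - x" using sx(1) by simp
        ultimately show ?thesis using subspace_diff[OF assms(2)] by simp
      qed
      ultimately have "s \<in> span B" using assms(10) by blast
      then have "a \<in> span (B \<union> X)"
        unfolding span_Un using sx by blast
      moreover have "independent (insert a (B \<union> X))"
        by (rule independent_mono[OF assms(6)]) (use aD XD assms(9) in blast)
      moreover have "a \<notin> B \<union> X" using insert.hyps(2) aD assms(8) by blast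
      ultimately show False by (simp add: independent_insert)
    qed
    moreover have "C \<union> insert a X = insert a (C \<union> X)" by blast
    ultimately show ?case using independent_insertI insert.IH[OF XD] by simp
  qed
  from this[of "D - C"] show ?thesis using assms(7) by simp
qed

text \<open>The dimension formula dim (S + T) + dim (S \<inter> T) = dim S + dim T for
  finite-dimensional subspaces (the library's dim_sums_Int in this generality).\<close>

lemma dim_sums_Int_fin:
  assumes "finite W" "subspace S" "subspace T" "S \<subseteq> span W" "T \<subseteq> span W"
  shows "dim {x + y |x y. x \<in> S \<and> y \<in> T} + dim (S \<inter> T) = dim S + dim T"
proof -
  have "S \<inter> T \<subseteq> span W" using assms(4) by blast
  then obtain B where B: "B \<subseteq> S \<inter> T" "independent B" "S \<inter> T \<subseteq> span B" "finite B"
      "card B = dim (S \<inter> T)"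
    by (rule finite_basis_exists[OF assms(1)])
  obtain C where C: "B \<subseteq> C" "C \<subseteq> S" "independent C" "S \<subseteq> span C"
    by (rule maximal_independent_subset_extend[of B S]) (use B(1,2) in auto)
  obtain D where D: "B \<subseteq> D" "D \<subseteq> T" "independent D" "T \<subseteq> span D"
    by (rule maximal_independent_subset_extend[of B T]) (use B(1,2) in auto)
  have fin: "finite C" "finite D"
    using independent_span_bound[OF assms(1)] C(2,3) D(2,3) assms(4,5) by (meson order_trans)+
  have dimS: "dim S = card C" and dimT: "dim T = card D"
    using basis_card_eq_dim C(2-4) D(2-4) by simp_all
  have "C \<inter> D = B"
  proof (rule spanning_subset_independent)
    show "B \<subseteq> C \<inter> D" "C \<inter> D \<subseteq> span B" using B(3) C(1,2) D(1,2) by auto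
    show "independent (C \<inter> D)" using independent_mono[OF C(3)] by blast
  qed
  then have "card (C \<union> D) + dim (S \<inter> T) = dim S + dim T"
    using card_Un_Int[OF fin] B(5) dimS dimT by simp
  moreover have "{x + y |x y. x \<in> S \<and> y \<in> T} = span (C \<union> D)"
    unfolding span_Un using span_subspace[OF C(2,4) assms(2)] span_subspace[OF D(2,4) assms(3)]
    by simp
  moreover have "independent (C \<union> D)"
    by (rule independent_Un_common_basis[OF assms(2,3) C(2,3) D(2,3) fin(2) C(1) D(1) B(3)])
  ultimately show ?thesis by (simp add: dim_eq_card_independent)
qed

end

section \<open>Families of subspaces closed under sums or intersections\<close>

lemma ssum_upper:
  assumes "0 \<in> U1" "0 \<in> U2"
  shows "U1 \<subseteq> ssum U1 U2" and "U2 \<subseteq> ssum U1 U2"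
proof -
  show "U1 \<subseteq> ssum U1 U2"
    using assms(2) unfolding ssum_def
    by (metis (mono_tags, lifting) add.right_neutral mem_Collect_eq subsetI)
  show "U2 \<subseteq> ssum U1 U2"
    using assms(1) unfolding ssum_def
    by (metis (mono_tags, lifting) add.left_neutral mem_Collect_eq subsetI)
qed

text \<open>A nonempty family of subspaces of a finite-dimensional space that is closed under
  sums has a greatest member: any member of maximal dimension contains all the others.\<close>

lemma greatest_of_sum_closed:
  fixes M :: "('a \<Rightarrow> 'k::field) set set"
  assumes W: "finite W" and "U0 \<in> M"
    and sub: "\<And>U. U \<in> M \<Longrightarrow> fvs.subspace U \<and> U \<subseteq> fvs.span W"
    and closed: "\<And>U1 U2. U1 \<in> M \<Longrightarrow> U2 \<in> M \<Longrightarrow> ssum U1 U2 \<in> M"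
  shows "\<exists>!Umax. Umax \<in> M \<and> (\<forall>U \<in> M. U \<subseteq> Umax)"
proof -
  have "\<forall>U. U \<in> M \<longrightarrow> fvs.dim U < card W + 1"
    using fvs.dim_le_card[OF _ W] sub by (simp add: less_Suc_eq_le)
  from Lattices_Big.ex_has_greatest_nat[OF \<open>U0 \<in> M\<close> this]
  obtain Umax where Umax: "Umax \<in> M" "\<And>U. U \<in> M \<Longrightarrow> fvs.dim U \<le> fvs.dim Umax"
    by blast
  have "U \<subseteq> Umax" if U: "U \<in> M" for U
  proof -
    have sum_in: "ssum Umax U \<in> M" by (rule closed[OF Umax(1) U])
    have "0 \<in> Umax" "0 \<in> U" using fvs.subspace_0 sub[OF U] sub[OF Umax(1)] by blast+
    note incl = ssum_upper[OF this]
    have "Umax = ssum Umax U"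
      by (rule fvs.subspace_dim_equal_fin[OF W conjunct2[OF sub[OF sum_in]]
            conjunct1[OF sub[OF Umax(1)]] incl(1) Umax(2)[OF sum_in]])
    with incl(2) show ?thesis by simp
  qed
  with Umax(1) show ?thesis by blast
qed

lemma least_of_Int_closed:
  fixes M :: "('a \<Rightarrow> 'k::field) set set"
  assumes W: "finite W" and "U0 \<in> M"
    and sub: "\<And>U. U \<in> M \<Longrightarrow> fvs.subspace U \<and> U \<subseteq> fvs.span W"
    and closed: "\<And>U1 U2. U1 \<in> M \<Longrightarrow> U2 \<in> M \<Longrightarrow> U1 \<inter> U2 \<in> M"
  shows "\<exists>!Umin. Umin \<in> M \<and> (\<forall>U \<in> M. Umin \<subseteq> U)"
proof -
  from ex_has_least_nat[of "\<lambda>U. U \<in> M" U0 fvs.dim, OF \<open>U0 \<in> M\<close>]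
  obtain Umin where Umin: "Umin \<in> M" "\<And>U. U \<in> M \<Longrightarrow> fvs.dim Umin \<le> fvs.dim U"
    by blast
  have "Umin \<subseteq> U" if U: "U \<in> M" for U
  proof -
    have int_in: "Umin \<inter> U \<in> M" by (rule closed[OF Umin(1) U])
    have "Umin \<inter> U = Umin"
      by (rule fvs.subspace_dim_equal_fin[OF W conjunct2[OF sub[OF Umin(1)]]
            conjunct1[OF sub[OF int_in]] Int_lower1 Umin(2)[OF int_in]])
    then show ?thesis by blast
  qed
  with Umin(1) show ?thesis by blast
qed

section \<open>The coordinate spaces F(V) and F(E)\<close>

text \<open>Coordinate functions supported in a finite set P lie in the span of the
  indicator functions of the points of P; hence F(V) and F(E) are finite-dimensional.\<close>

definition delta :: "'a \<Rightarrow> ('a \<Rightarrow> 'k::field)" where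
  "delta p = (\<lambda>q. if q = p then 1 else 0)"

lemma sum_fun_apply: "(\<Sum>a\<in>A. f a) q = (\<Sum>a\<in>A. f a q)"
  by (induction A rule: infinite_finite_induct) auto

lemma finite_support_in_span:
  fixes x :: "'a \<Rightarrow> 'k::field"
  assumes "finite P" "\<And>q. x q \<noteq> 0 \<Longrightarrow> q \<in> P"
  shows "x \<in> fvs.span (delta ` P)"
proof -
  have "x = (\<Sum>p\<in>P. fscale (x p) (delta p))"
  proof
    fix q
    have "(\<Sum>p\<in>P. fscale (x p) (delta p)) q = (\<Sum>p\<in>P. if p = q then x q else 0)"
      unfolding sum_fun_apply by (rule sum.cong) (auto simp: fscale_def delta_def)
    also have "\<dots> = x q" using assms by (auto simp: sum.delta)
    finally show "x q = (\<Sum>p\<in>P. fscale (x p) (delta p)) q" by simp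
  qed
  also have "\<dots> \<in> fvs.span (delta ` P)"
    by (intro fvs.span_sum fvs.span_scale fvs.span_base) auto
  finally show ?thesis .
qed

lemma FV_finite_dimensional:
  assumes "fin_digraph G"
  shows "\<exists>W. finite W \<and> FV G F \<subseteq> fvs.span W"
proof (intro exI conjI)
  let ?P = "Sigma (verts G) (\<lambda>v. {..<dimV F v})"
  show "finite (delta ` ?P)" using fin_digraph.finite_verts[OF assms] by simp
  show "FV G F \<subseteq> fvs.span (delta ` ?P)"
    using fin_digraph.finite_verts[OF assms]
    by (auto simp: FV_def intro!: finite_support_in_span)
qed

lemma FE_finite_dimensional:
  assumes "fin_digraph G"
  shows "\<exists>W. finite W \<and> FE G F \<subseteq> fvs.span W"
proof (intro exI conjI)
  let ?P = "Sigma (arcs G) (\<lambda>e. {..<dimE F e})"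
  show "finite (delta ` ?P)" using fin_digraph.finite_arcs[OF assms] by simp
  show "FE G F \<subseteq> fvs.span (delta ` ?P)"
    using fin_digraph.finite_arcs[OF assms]
    by (auto simp: FE_def intro!: finite_support_in_span)
qed

lemma support_subspace: "fvs.subspace {x :: 'a \<Rightarrow> 'k::field. \<forall>q. x q \<noteq> 0 \<longrightarrow> P q}"
  by (auto simp: fvs.subspace_def fscale_def) (metis add.left_neutral add.right_neutral)

lemma FV_subspace: "fvs.subspace (FV G F)"
proof -
  have "FV G F = {x. \<forall>q. x q \<noteq> 0 \<longrightarrow> fst q \<in> verts G \<and> snd q < dimV F (fst q)}"
    by (auto simp: FV_def)
  then show ?thesis by (simp only:) (rule support_subspace)
qed

lemma FE_subspace: "fvs.subspace (FE G F)"
proof -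
  have "FE G F = {w. \<forall>q. w q \<noteq> 0 \<longrightarrow> fst q \<in> arcs G \<and> snd q < dimE F (fst q)}"
    by (auto simp: FE_def)
  then show ?thesis by (simp only:) (rule support_subspace)
qed

lemma ssum_subspace: "fvs.subspace U1 \<Longrightarrow> fvs.subspace U2 \<Longrightarrow> fvs.subspace (ssum U1 U2)"
  unfolding ssum_def by (rule fvs.subspace_sums)

lemma subspaces_FV_closed:
  assumes "U1 \<in> subspaces_FV G F" "U2 \<in> subspaces_FV G F"
  shows "U1 \<inter> U2 \<in> subspaces_FV G F" "ssum U1 U2 \<in> subspaces_FV G F"
proof -
  have "ssum U1 U2 \<subseteq> FV G F"
    using assms fvs.subspace_add[OF FV_subspace] unfolding ssum_def subspaces_FV_def by blast
  then show "U1 \<inter> U2 \<in> subspaces_FV G F" "ssum U1 U2 \<in> subspaces_FV G F"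
    using assms by (auto simp: subspaces_FV_def fvs.subspace_inter ssum_subspace)
qed

section \<open>The space of sections Gamma_ht\<close>

lemma d_h_linear: "d_h G F (x + y) = d_h G F x + d_h G F y"
    "d_h G F (fscale c x) = fscale c (d_h G F x)" "d_h G F 0 = 0"
  by (auto simp: d_h_def fun_eq_iff fscale_def sum.distrib distrib_left sum_distrib_left mult.left_commute)

lemma d_t_linear: "d_t G F (x + y) = d_t G F x + d_t G F y"
    "d_t G F (fscale c x) = fscale c (d_t G F x)" "d_t G F 0 = 0"
  by (auto simp: d_t_def fun_eq_iff fscale_def sum.distrib distrib_left sum_distrib_left mult.left_commute)

lemma edge_comp_linear: "edge_comp (x + y) e = edge_comp x e + edge_comp y e"
    "edge_comp (fscale c x) e = fscale c (edge_comp x e)" "edge_comp 0 e = 0"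
  by (auto simp: edge_comp_def fun_eq_iff fscale_def)

lemma Gamma_subspace:
  assumes U: "fvs.subspace U"
  shows "fvs.subspace (Gamma_ht G F U)"
  using fvs.subspace_0[OF FE_subspace] fvs.subspace_add[OF FE_subspace]
    fvs.subspace_scale[OF FE_subspace]
    fvs.subspace_0[OF U] fvs.subspace_add[OF U] fvs.subspace_scale[OF U]
  by (intro fvs.subspaceI) (auto simp: Gamma_ht_def d_h_linear d_t_linear edge_comp_linear)

lemma Gamma_Int: "Gamma_ht G F (U1 \<inter> U2) = Gamma_ht G F U1 \<inter> Gamma_ht G F U2"
  by (auto simp: Gamma_ht_def)

text \<open>A sum of sections over U1 and over U2 is a section over U1 + U2.  The inclusion
  may be strict; its dimension gap is exactly the defect in the submodularity of the excess.\<close>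

lemma ssum_Gamma_subset: "ssum (Gamma_ht G F U1) (Gamma_ht G F U2) \<subseteq> Gamma_ht G F (ssum U1 U2)"
  using fvs.subspace_add[OF FE_subspace]
  by (fastforce simp: ssum_def Gamma_ht_def d_h_linear d_t_linear edge_comp_linear)

section \<open>The excess\<close>

text \<open>Dimension count behind submodularity: the dimension formula in F(V) and in F(E),
  together with the inclusion above.\<close>

lemma excess_modular_defect:
  assumes fG: "fin_digraph G" and U1: "U1 \<in> subspaces_FV G F" and U2: "U2 \<in> subspaces_FV G F"
  shows "excess G F (U1 \<inter> U2) + excess G F (ssum U1 U2) - excess G F U1 - excess G F U2
    = int (fvs.dim (Gamma_ht G F (ssum U1 U2)))
      - int (fvs.dim (ssum (Gamma_ht G F U1) (Gamma_ht G F U2)))"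
proof -
  obtain WV where WV: "finite WV" "FV G F \<subseteq> fvs.span WV" using FV_finite_dimensional[OF fG] by blast
  obtain WE where WE: "finite WE" "FE G F \<subseteq> fvs.span WE" using FE_finite_dimensional[OF fG] by blast
  have s: "fvs.subspace U1" "fvs.subspace U2" "U1 \<subseteq> fvs.span WV" "U2 \<subseteq> fvs.span WV"
    using U1 U2 WV(2) by (auto simp: subspaces_FV_def)
  have g: "Gamma_ht G F U \<subseteq> fvs.span WE" for U
    using WE(2) by (auto simp: Gamma_ht_def)
  have "fvs.dim (ssum U1 U2) + fvs.dim (U1 \<inter> U2) = fvs.dim U1 + fvs.dim U2"
    unfolding ssum_def by (rule fvs.dim_sums_Int_fin[OF WV(1) s])
  moreover have "fvs.dim (ssum (Gamma_ht G F U1) (Gamma_ht G F U2))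
      + fvs.dim (Gamma_ht G F (U1 \<inter> U2)) = fvs.dim (Gamma_ht G F U1) + fvs.dim (Gamma_ht G F U2)"
    unfolding ssum_def Gamma_Int
    by (rule fvs.dim_sums_Int_fin[OF WE(1) Gamma_subspace[OF s(1)] Gamma_subspace[OF s(2)] g g])
  ultimately show ?thesis unfolding excess_def by linarith
qed

lemma excess_submodular:
  assumes fG: "fin_digraph G" and U1: "U1 \<in> subspaces_FV G F" and U2: "U2 \<in> subspaces_FV G F"
  shows "excess G F U1 + excess G F U2 \<le> excess G F (U1 \<inter> U2) + excess G F (ssum U1 U2)"
proof -
  obtain WE where WE: "finite WE" "FE G F \<subseteq> fvs.span WE" using FE_finite_dimensional[OF fG] by blast
  have "Gamma_ht G F (ssum U1 U2) \<subseteq> fvs.span WE" using WE(2) by (auto simp: Gamma_ht_def)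
  from fvs.dim_mono_fin[OF WE(1) this ssum_Gamma_subset]
  show ?thesis using excess_modular_defect[OF assms] by linarith
qed

lemma Gamma_additive_if_modular:
  assumes fG: "fin_digraph G" and U1: "U1 \<in> subspaces_FV G F" and U2: "U2 \<in> subspaces_FV G F"
    and eq: "excess G F (U1 \<inter> U2) + excess G F (ssum U1 U2) \<le> excess G F U1 + excess G F U2"
  shows "Gamma_ht G F (ssum U1 U2) = ssum (Gamma_ht G F U1) (Gamma_ht G F U2)"
proof -
  obtain WE where WE: "finite WE" "FE G F \<subseteq> fvs.span WE" using FE_finite_dimensional[OF fG] by blast
  have sub: "fvs.subspace U1" "fvs.subspace U2" using U1 U2 by (auto simp: subspaces_FV_def)
  have span: "Gamma_ht G F (ssum U1 U2) \<subseteq> fvs.span WE" using WE(2) by (auto simp: Gamma_ht_def)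
  have subspace: "fvs.subspace (ssum (Gamma_ht G F U1) (Gamma_ht G F U2))"
    using ssum_subspace Gamma_subspace sub by blast
  have "fvs.dim (Gamma_ht G F (ssum U1 U2)) \<le> fvs.dim (ssum (Gamma_ht G F U1) (Gamma_ht G F U2))"
    using excess_modular_defect[OF assms(1-3)] eq by linarith
  from fvs.subspace_dim_equal_fin[OF WE(1) span subspace ssum_Gamma_subset this] show ?thesis
    by simp
qed

lemma max_excess_attained:
  assumes fG: "fin_digraph G"
  shows "\<And>U. U \<in> subspaces_FV G F \<Longrightarrow> excess G F U \<le> max_excess G F"
    and "\<exists>U \<in> subspaces_FV G F. excess G F U = max_excess G F"
proof -
  obtain WV where WV: "finite WV" "FV G F \<subseteq> fvs.span WV" using FV_finite_dimensional[OF fG] by blast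
  obtain WE where WE: "finite WE" "FE G F \<subseteq> fvs.span WE" using FE_finite_dimensional[OF fG] by blast
  have "excess G F U \<in> {- int (card WV) .. int (card WE)}" if "U \<in> subspaces_FV G F" for U
  proof -
    have "fvs.dim U \<le> card WV"
      using that WV by (intro fvs.dim_le_card) (auto simp: subspaces_FV_def)
    moreover have "fvs.dim (Gamma_ht G F U) \<le> card WE"
      using WE by (intro fvs.dim_le_card) (auto simp: Gamma_ht_def)
    ultimately show ?thesis unfolding excess_def by auto
  qed
  then have fin: "finite (excess G F ` subspaces_FV G F)"
    by (auto intro: finite_subset[of _ "{- int (card WV) .. int (card WE)}"])
  have "{0} \<in> subspaces_FV G F" by (auto simp: subspaces_FV_def FV_def)
  then have ne: "excess G F ` subspaces_FV G F \<noteq> {}" by blast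
  show "\<And>U. U \<in> subspaces_FV G F \<Longrightarrow> excess G F U \<le> max_excess G F"
    unfolding max_excess_def using fin by auto
  show "\<exists>U \<in> subspaces_FV G F. excess G F U = max_excess G F"
    using Max_in[OF fin ne] unfolding max_excess_def by auto
qed

lemma maximisers_closed:
  assumes fG: "fin_digraph G"
    and U1: "U1 \<in> subspaces_FV G F" "excess G F U1 = max_excess G F"
    and U2: "U2 \<in> subspaces_FV G F" "excess G F U2 = max_excess G F"
  shows "excess G F (U1 \<inter> U2) = max_excess G F" "excess G F (ssum U1 U2) = max_excess G F"
    and "Gamma_ht G F (ssum U1 U2) = ssum (Gamma_ht G F U1) (Gamma_ht G F U2)"
proof -
  have "excess G F (U1 \<inter> U2) \<le> max_excess G F" "excess G F (ssum U1 U2) \<le> max_excess G F"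
    using max_excess_attained(1)[OF fG] subspaces_FV_closed[OF U1(1) U2(1)] by auto
  moreover note excess_submodular[OF fG U1(1) U2(1)]
  ultimately show "excess G F (U1 \<inter> U2) = max_excess G F" "excess G F (ssum U1 U2) = max_excess G F"
    using U1(2) U2(2) by linarith+
  then show "Gamma_ht G F (ssum U1 U2) = ssum (Gamma_ht G F U1) (Gamma_ht G F U2)"
    using Gamma_additive_if_modular[OF fG U1(1) U2(1)] U1(2) U2(2) by simp
qed

theorem theorem1:
  fixes G :: "('v, 'e) pre_digraph" and F :: "('e, 'v, 'k::field) sheaf"
  assumes "fin_digraph G"
  shows "(\<forall>U1 \<in> subspaces_FV G F. \<forall>U2 \<in> subspaces_FV G F.
            excess G F U1 + excess G F U2
              \<le> excess G F (U1 \<inter> U2) + excess G F (ssum U1 U2))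
    \<and> (let M = {U \<in> subspaces_FV G F. excess G F U = max_excess G F} in
         (\<forall>U1 \<in> M. \<forall>U2 \<in> M. U1 \<inter> U2 \<in> M \<and> ssum U1 U2 \<in> M)
       \<and> (\<exists>!Umax. Umax \<in> M \<and> (\<forall>U \<in> M. U \<subseteq> Umax))
       \<and> (\<exists>!Umin. Umin \<in> M \<and> (\<forall>U \<in> M. Umin \<subseteq> U))
       \<and> (\<forall>U1 \<in> M. \<forall>U2 \<in> M.
            Gamma_ht G F (ssum U1 U2) = ssum (Gamma_ht G F U1) (Gamma_ht G F U2)))"
proof -
  define M where "M = {U \<in> subspaces_FV G F. excess G F U = max_excess G F}"
  obtain WV where WV: "finite WV" "FV G F \<subseteq> fvs.span WV"
    using FV_finite_dimensional[OF assms] by blast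
  obtain U0 where "U0 \<in> M" using max_excess_attained(2)[OF assms] unfolding M_def by blast
  have sub: "fvs.subspace U \<and> U \<subseteq> fvs.span WV" if "U \<in> M" for U
    using that WV(2) by (auto simp: M_def subspaces_FV_def)
  have closed: "U1 \<inter> U2 \<in> M" "ssum U1 U2 \<in> M" if "U1 \<in> M" "U2 \<in> M" for U1 U2
    using that maximisers_closed[OF assms] subspaces_FV_closed by (auto simp: M_def)
  have submodular: "\<forall>U1 \<in> subspaces_FV G F. \<forall>U2 \<in> subspaces_FV G F.
      excess G F U1 + excess G F U2 \<le> excess G F (U1 \<inter> U2) + excess G F (ssum U1 U2)"
    using excess_submodular[OF assms] by blast
  have lattice: "\<forall>U1 \<in> M. \<forall>U2 \<in> M. U1 \<inter> U2 \<in> M \<and> ssum U1 U2 \<in> M"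
    using closed by blast
  have additive: "\<forall>U1 \<in> M. \<forall>U2 \<in> M.
      Gamma_ht G F (ssum U1 U2) = ssum (Gamma_ht G F U1) (Gamma_ht G F U2)"
    using maximisers_closed(3)[OF assms] by (auto simp: M_def)
  have greatest: "\<exists>!Umax. Umax \<in> M \<and> (\<forall>U \<in> M. U \<subseteq> Umax)"
    by (rule greatest_of_sum_closed[OF WV(1) \<open>U0 \<in> M\<close> sub closed(2)])
  have least: "\<exists>!Umin. Umin \<in> M \<and> (\<forall>U \<in> M. Umin \<subseteq> U)"
    by (rule least_of_Int_closed[OF WV(1) \<open>U0 \<in> M\<close> sub closed(1)])
  show ?thesis
    unfolding Let_def M_def[symmetric]
    using submodular lattice greatest least additive by (intro conjI)
qed

end
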